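(* Let $\gamma\in(1,3)$, $\mu\in(0,1)$, $K>0$, $U_D=\frac{2}{3-\gamma}$ and \[ y_D=-K\frac{\big(U_D-\frac{2\mu}{\gamma+1}\big)^{\frac1\mu-1}}{U_D^{\frac1\mu}}<0. \] Define $U^{\mathrm{sp}}=U^{\mathrm{sp}}(y)$ for $y_D<y<0$ by \[ y=-K\frac{\big(U^{\mathrm{sp}}-\frac{2\mu}{\gamma+1}\big)^{\frac1\mu-1}}{(U^{\mathrm{sp}})^{\frac1\mu}},\qquad y_D<y<0,\ U^{\mathrm{sp}}>U_D. \] Then $U^{\mathrm{sp}}$ solves \[ y\frac{dU}{dy}=-\frac{[(\gamma+1)U-2\mu]U}{(\gamma+1)U-2}, \] satisfies $\lim_{y\to0^-}yU^{\mathrm{sp}}(y)=-K$, and $\frac{2}{3-\gamma}=U_D<U^{\mathrm{sp}}<\infty$. *)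

theory Defs
  imports "HOL-Analysis.Analysis"
begin

definition Yfun :: "real \<Rightarrow> real \<Rightarrow> real \<Rightarrow> real \<Rightarrow> real" where
  "Yfun \<gamma> \<mu> K U = - K * (U - 2 * \<mu> / (\<gamma> + 1)) powr (1 / \<mu> - 1) / U powr (1 / \<mu>)"

definition U_D :: "real \<Rightarrow> real" where
  "U_D \<gamma> = 2 / (3 - \<gamma>)"

definition y_D :: "real \<Rightarrow> real \<Rightarrow> real \<Rightarrow> real" where
  "y_D \<gamma> \<mu> K = Yfun \<gamma> \<mu> K (U_D \<gamma>)"

definition Usp :: "real \<Rightarrow> real \<Rightarrow> real \<Rightarrow> real \<Rightarrow> real" where
  "Usp \<gamma> \<mu> K y = (THE U. U > U_D \<gamma> \<and> y = Yfun \<gamma> \<mu> K U)"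

end

theory Submission
  imports Defs "HOL-Real_Asymp.Real_Asymp"
begin

text \<open>On [U_D, \<infinity>) the function Y = Yfun \<gamma> \<mu> K is negative and its logarithmic derivative
  Y'/Y = (2 - (\<gamma>+1) U) / (U ((\<gamma>+1) U - 2 \<mu>)) is negative too, so Y is continuous and strictly
  increasing; moreover U Y(U) \<rightarrow> -K as U \<rightarrow> \<infinity>. Hence Y maps (U_D, \<infinity>) bijectively onto
  (y_D, 0) and U^sp is its inverse. The inverse function rule gives y U^sp' = Y/Y', which is the
  ODE, and y U^sp(y) = Y(U) U \<rightarrow> -K because U^sp(y) \<rightarrow> \<infinity> as y \<rightarrow> 0-.\<close>

locale strict_mono_on_tendsto =
  fixes f :: "real \<Rightarrow> real" and a L :: real
  assumes mono: "strict_mono_on {a..} f"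
    and cont: "continuous_on {a..} f"
    and lim: "(f \<longlongrightarrow> L) at_top"
begin

lemma less_limit:
  assumes "a \<le> x"
  shows "f x < L"
proof -
  have "f (x + 1) \<le> L"
    using lim
  proof (rule tendsto_lowerbound)
    show "\<forall>\<^sub>F t in at_top. f (x + 1) \<le> f t"
      using eventually_ge_at_top[of "x + 1"]
      by eventually_elim (use assms in \<open>auto intro: strict_mono_on_leD[OF mono]\<close>)
  qed simp
  moreover have "f x < f (x + 1)"
    using assms by (auto intro: strict_mono_onD[OF mono])
  ultimately show ?thesis by simp
qed

lemma bij_betw_greaterThan: "bij_betw f {a<..} {f a<..<L}"
proof (rule bij_betw_imageI)
  show "inj_on f {a<..}"
    using strict_mono_on_imp_inj_on[OF mono] by (rule inj_on_subset) auto
  show "f ` {a<..} = {f a<..<L}"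
  proof
    show "f ` {a<..} \<subseteq> {f a<..<L}"
      using strict_mono_onD[OF mono, of a] less_limit by force
    show "{f a<..<L} \<subseteq> f ` {a<..}"
    proof
      fix y assume y: "y \<in> {f a<..<L}"
      have "\<forall>\<^sub>F t in at_top. y < f t \<and> a \<le> t"
        using order_tendstoD(1)[OF lim] y eventually_ge_at_top[of a] by (auto intro: eventually_conj)
      then obtain b where b: "y < f b" "a \<le> b"
        by (auto dest: eventually_happens)
      obtain x where x: "a \<le> x" "x \<le> b" "f x = y"
        using IVT'[of f a y b] y b continuous_on_subset[OF cont] by fastforce
      with y have "a < x" by (cases "x = a") auto
      with x show "y \<in> f ` {a<..}" by auto
    qed
  qed
qed

lemma inj_on_greaterThan: "inj_on f {a<..}"
  using bij_betw_greaterThan by (rule bij_betw_imp_inj_on)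

lemma
  assumes "y \<in> {f a<..<L}"
  shows the_inv_into_greaterThan_gt: "a < the_inv_into {a<..} f y"
    and f_the_inv_into_greaterThan: "f (the_inv_into {a<..} f y) = y"
  using bij_betw_greaterThan assms
  by (auto simp: bij_betw_def f_the_inv_into_f intro!: the_inv_into_into[of _ _ _ "{a<..}", simplified])

lemma isCont_the_inv_into_greaterThan:
  assumes "y \<in> {f a<..<L}"
  shows "isCont (the_inv_into {a<..} f) y"
proof -
  define x where "x = the_inv_into {a<..} f y"
  have x: "a < x" "f x = y"
    unfolding x_def using the_inv_into_greaterThan_gt[OF assms] f_the_inv_into_greaterThan[OF assms] .
  have "isCont (the_inv_into {a<..} f) (f x)"
  proof (rule isCont_inverse_function2[of "(a + x) / 2" x "x + 1"])
    fix z assume z: "(a + x) / 2 \<le> z" "z \<le> x + 1"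
    with x have "z \<in> interior {a..}" by simp
    then show "isCont f z"
      by (rule continuous_on_interior[OF cont])
    show "the_inv_into {a<..} f (f z) = z"
      using z x by (intro the_inv_into_f_f[OF inj_on_greaterThan]) simp
  qed (use x in simp_all)
  with x show ?thesis by simp
qed

lemma has_real_derivative_the_inv_into_greaterThan:
  assumes y: "y \<in> {f a<..<L}"
    and deriv: "(f has_real_derivative D) (at (the_inv_into {a<..} f y))" and "D \<noteq> 0"
  shows "(the_inv_into {a<..} f has_real_derivative inverse D) (at y)"
  using deriv \<open>D \<noteq> 0\<close>
proof (rule DERIV_inverse_function)
  show "f a < y" "y < L" using y by simp_all
  show "f (the_inv_into {a<..} f z) = z" if "f a < z" "z < L" for z
    using f_the_inv_into_greaterThan that by simp
  show "isCont (the_inv_into {a<..} f) y"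
    by (rule isCont_the_inv_into_greaterThan[OF y])
qed

lemma filterlim_the_inv_into_greaterThan_at_top:
  "filterlim (the_inv_into {a<..} f) at_top (at_left L)"
proof (subst filterlim_at_top, intro allI)
  fix Z :: real
  define W where "W = max Z (a + 1)"
  have W: "a < W" "Z \<le> W" by (auto simp: W_def)
  then have "f W < L"
    by (intro less_limit) simp
  then have "\<forall>\<^sub>F y in at_left L. y \<in> {f W<..<L}"
    by (rule eventually_at_left_real)
  then show "\<forall>\<^sub>F y in at_left L. Z \<le> the_inv_into {a<..} f y"
  proof eventually_elim
    case (elim y)
    have "f a < f W"
      using W by (intro strict_mono_onD[OF mono]) auto
    with elim have y: "y \<in> {f a<..<L}" by simp
    have "\<not> the_inv_into {a<..} f y \<le> W"
      using strict_mono_on_leD[OF mono, of "the_inv_into {a<..} f y" W] W elim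
        the_inv_into_greaterThan_gt[OF y] f_the_inv_into_greaterThan[OF y]
      by auto
    with W show ?case by simp
  qed
qed

end

lemma Usp_eq_the_inv_into: "Usp \<gamma> \<mu> K = the_inv_into {U_D \<gamma><..} (Yfun \<gamma> \<mu> K)"
  by (auto simp: fun_eq_iff Usp_def the_inv_into_def eq_commute)

lemma U_D_gt: "1 < \<gamma> \<Longrightarrow> \<gamma> < 3 \<Longrightarrow> 2 / (\<gamma> + 1) < U_D \<gamma>"
  unfolding U_D_def by (simp add: frac_less2)

lemma Yfun_neg:
  assumes "0 < K" "0 < \<mu>" "0 < \<gamma> + 1" "2 * \<mu> / (\<gamma> + 1) < U"
  shows "Yfun \<gamma> \<mu> K U < 0"
proof -
  have "0 < 2 * \<mu> / (\<gamma> + 1)" using assms by simp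
  with assms have "0 < U" "0 < U - 2 * \<mu> / (\<gamma> + 1)" by linarith+
  with \<open>0 < K\<close> show ?thesis by (simp add: Yfun_def)
qed

lemma Yfun_has_real_derivative:
  assumes "0 < \<mu>" "0 < \<gamma> + 1" "2 * \<mu> / (\<gamma> + 1) < U"
  shows "(Yfun \<gamma> \<mu> K has_real_derivative
           Yfun \<gamma> \<mu> K U * (2 - (\<gamma> + 1) * U) / (U * ((\<gamma> + 1) * U - 2 * \<mu>))) (at U)"
proof -
  define c where "c = 2 * \<mu> / (\<gamma> + 1)"
  define d where "d = (\<gamma> + 1) * U - 2 * \<mu>"
  have "0 < c" using assms by (simp add: c_def)
  with assms have U: "0 < U" "0 < U - c" unfolding c_def by linarith+
  then have "0 < d"
    using assms(2) by (simp add: c_def d_def field_simps)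
  have powr_pred: "(U - c) powr (1 / \<mu> - 1 - 1) = (U - c) powr (1 / \<mu> - 1) / (U - c)"
    "U powr (1 / \<mu> - 1) = U powr (1 / \<mu>) / U"
    using U by (simp_all add: powr_diff power2_eq_square)
  have "(Yfun \<gamma> \<mu> K has_real_derivative
          - K * ((1 / \<mu> - 1) * (U - c) powr (1 / \<mu> - 1 - 1) * U powr (1 / \<mu>)
                 - (U - c) powr (1 / \<mu> - 1) * ((1 / \<mu>) * U powr (1 / \<mu> - 1)))
           / (U powr (1 / \<mu>) * U powr (1 / \<mu>))) (at U)"
    unfolding Yfun_def c_def[symmetric] using U
    by (auto intro!: derivative_eq_intros simp: field_simps)
  also have "- K * ((1 / \<mu> - 1) * (U - c) powr (1 / \<mu> - 1 - 1) * U powr (1 / \<mu>)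
                 - (U - c) powr (1 / \<mu> - 1) * ((1 / \<mu>) * U powr (1 / \<mu> - 1)))
           / (U powr (1 / \<mu>) * U powr (1 / \<mu>))
     = Yfun \<gamma> \<mu> K U * ((1 / \<mu> - 1) / (U - c) - (1 / \<mu>) / U)"
    unfolding Yfun_def c_def[symmetric] powr_pred using U by (simp add: field_simps)
  also have "(1 / \<mu> - 1) / (U - c) - (1 / \<mu>) / U = (c / \<mu> - U) / (U * (U - c))"
    using U assms(1) by (simp add: field_simps)
  also have "c / \<mu> = 2 / (\<gamma> + 1)"
    using assms(1) by (simp add: c_def)
  also have "U - c = d / (\<gamma> + 1)"
    using assms(2) by (simp add: c_def d_def field_simps)
  also have "Yfun \<gamma> \<mu> K U * ((2 / (\<gamma> + 1) - U) / (U * (d / (\<gamma> + 1))))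
      = Yfun \<gamma> \<mu> K U * (2 - (\<gamma> + 1) * U) / (U * d)"
    using assms(2) U(1) \<open>0 < d\<close> by (simp add: divide_simps)
  finally show ?thesis unfolding d_def .
qed

lemma Yfun_strict_mono_on:
  assumes "0 < K" "0 < \<mu>" "\<mu> < 1" "0 < \<gamma> + 1"
  shows "strict_mono_on {2 / (\<gamma> + 1)<..} (Yfun \<gamma> \<mu> K)"
proof (rule strict_mono_onI)
  fix u v assume uv: "u \<in> {2 / (\<gamma> + 1)<..}" "v \<in> {2 / (\<gamma> + 1)<..}" "u < v"
  show "Yfun \<gamma> \<mu> K u < Yfun \<gamma> \<mu> K v"
  proof (rule DERIV_pos_imp_increasing[OF \<open>u < v\<close>])
    fix U assume "u \<le> U" "U \<le> v"
    with uv have U: "2 / (\<gamma> + 1) < U" by simp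
    have "2 * \<mu> / (\<gamma> + 1) < 2 / (\<gamma> + 1)" "0 < 2 / (\<gamma> + 1)"
      using assms by (simp_all add: divide_strict_right_mono)
    with U have c: "2 * \<mu> / (\<gamma> + 1) < U" and "0 < U" by linarith+
    moreover have "2 - (\<gamma> + 1) * U < 0" "0 < (\<gamma> + 1) * U - 2 * \<mu>"
      using U c \<open>0 < \<gamma> + 1\<close> by (simp_all add: field_simps)
    ultimately have "0 < Yfun \<gamma> \<mu> K U * (2 - (\<gamma> + 1) * U) / (U * ((\<gamma> + 1) * U - 2 * \<mu>))"
      using Yfun_neg[OF assms(1,2,4) c] by (intro divide_pos_pos mult_neg_neg mult_pos_pos)
    with Yfun_has_real_derivative[OF assms(2,4) c]
    show "\<exists>D. (Yfun \<gamma> \<mu> K has_real_derivative D) (at U) \<and> 0 < D" by blast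
  qed
qed

lemma Yfun_times_tendsto_at_top:
  assumes "0 < \<mu>" "0 < \<gamma> + 1"
  shows "((\<lambda>U. Yfun \<gamma> \<mu> K U * U) \<longlongrightarrow> - K) at_top"
  using assms unfolding Yfun_def by real_asymp

lemma Yfun_tendsto_at_top:
  assumes "0 < \<mu>" "0 < \<gamma> + 1"
  shows "(Yfun \<gamma> \<mu> K \<longlongrightarrow> 0) at_top"
  using assms unfolding Yfun_def by real_asymp

lemma Yfun_strict_mono_on_tendsto:
  assumes "1 < \<gamma>" "\<gamma> < 3" "0 < \<mu>" "\<mu> < 1" "0 < K"
  shows "strict_mono_on_tendsto (Yfun \<gamma> \<mu> K) (U_D \<gamma>) 0"
proof
  have "0 < \<gamma> + 1" "2 * \<mu> / (\<gamma> + 1) < 2 / (\<gamma> + 1)"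
    using assms by (simp_all add: divide_strict_right_mono)
  with U_D_gt[OF assms(1,2)]
  have sub: "{U_D \<gamma>..} \<subseteq> {2 / (\<gamma> + 1)<..}" "{U_D \<gamma>..} \<subseteq> {2 * \<mu> / (\<gamma> + 1)<..}"
    by auto
  show "strict_mono_on {U_D \<gamma>..} (Yfun \<gamma> \<mu> K)"
    using Yfun_strict_mono_on[OF assms(5,3,4) \<open>0 < \<gamma> + 1\<close>] sub(1) by (rule monotone_on_subset)
  show "continuous_on {U_D \<gamma>..} (Yfun \<gamma> \<mu> K)"
  proof (rule continuous_at_imp_continuous_on, intro ballI)
    fix U assume "U \<in> {U_D \<gamma>..}"
    with sub(2) have "2 * \<mu> / (\<gamma> + 1) < U" by auto
    then show "isCont (Yfun \<gamma> \<mu> K) U"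
      by (rule DERIV_isCont[OF Yfun_has_real_derivative[OF assms(3) \<open>0 < \<gamma> + 1\<close>]])
  qed
  show "(Yfun \<gamma> \<mu> K \<longlongrightarrow> 0) at_top"
    using Yfun_tendsto_at_top[OF assms(3) \<open>0 < \<gamma> + 1\<close>] .
qed

context
  fixes \<gamma> \<mu> K :: real
  assumes params: "1 < \<gamma>" "\<gamma> < 3" "0 < \<mu>" "\<mu> < 1" "0 < K"
begin

interpretation Y: strict_mono_on_tendsto "Yfun \<gamma> \<mu> K" "U_D \<gamma>" 0
  by (rule Yfun_strict_mono_on_tendsto[OF params])

lemma y_D_neg: "y_D \<gamma> \<mu> K < 0"
  unfolding y_D_def by (rule Y.less_limit) simp

lemma
  assumes "y_D \<gamma> \<mu> K < y" "y < 0"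
  shows U_D_less_Usp: "U_D \<gamma> < Usp \<gamma> \<mu> K y"
    and Yfun_Usp: "Yfun \<gamma> \<mu> K (Usp \<gamma> \<mu> K y) = y"
  using assms Y.the_inv_into_greaterThan_gt Y.f_the_inv_into_greaterThan
  by (simp_all add: y_D_def Usp_eq_the_inv_into)

lemma Usp_Yfun: "U_D \<gamma> < U \<Longrightarrow> Usp \<gamma> \<mu> K (Yfun \<gamma> \<mu> K U) = U"
  unfolding Usp_eq_the_inv_into by (rule the_inv_into_f_f[OF Y.inj_on_greaterThan]) simp

lemma Usp_ode:
  assumes y: "y_D \<gamma> \<mu> K < y" "y < 0"
  defines "U \<equiv> Usp \<gamma> \<mu> K y"
  shows "\<exists>D. (Usp \<gamma> \<mu> K has_real_derivative D) (at y) \<and>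
           y * D = - (((\<gamma> + 1) * U - 2 * \<mu>) * U) / ((\<gamma> + 1) * U - 2)"
proof -
  have "2 * \<mu> / (\<gamma> + 1) < 2 / (\<gamma> + 1)" "0 < 2 / (\<gamma> + 1)"
    using params by (simp_all add: divide_strict_right_mono)
  moreover have U: "2 / (\<gamma> + 1) < U"
    using U_D_gt[OF params(1,2)] U_D_less_Usp[OF y] by (simp add: U_def)
  ultimately have c: "2 * \<mu> / (\<gamma> + 1) < U" and "0 < U"
    by linarith+
  have "0 < (\<gamma> + 1) * U - 2"
    using U params by (simp add: field_simps)
  define D where "D = Yfun \<gamma> \<mu> K U * (2 - (\<gamma> + 1) * U) / (U * ((\<gamma> + 1) * U - 2 * \<mu>))"
  have "(Yfun \<gamma> \<mu> K has_real_derivative D) (at U)"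
    unfolding D_def using params c by (intro Yfun_has_real_derivative) simp_all
  moreover have "D \<noteq> 0"
    using Yfun_neg[OF params(5,3) _ c] params c \<open>0 < U\<close> \<open>0 < (\<gamma> + 1) * U - 2\<close>
    by (simp add: D_def)
  ultimately have Usp_deriv: "(Usp \<gamma> \<mu> K has_real_derivative inverse D) (at y)"
    using y unfolding U_def Usp_eq_the_inv_into
    by (intro Y.has_real_derivative_the_inv_into_greaterThan) (simp_all add: y_D_def)
  have "y * inverse D = U * ((\<gamma> + 1) * U - 2 * \<mu>) / (2 - (\<gamma> + 1) * U)"
    using Yfun_Usp[OF y] \<open>y < 0\<close> by (simp add: D_def U_def)
  also have "\<dots> = - (((\<gamma> + 1) * U - 2 * \<mu>) * U) / ((\<gamma> + 1) * U - 2)"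
    by (subst minus_diff_eq[symmetric]) (simp only: divide_minus_right minus_divide_left mult.commute)
  finally show ?thesis
    using Usp_deriv by blast
qed

lemma Usp_times_tendsto: "((\<lambda>y. y * Usp \<gamma> \<mu> K y) \<longlongrightarrow> - K) (at_left 0)"
proof -
  have "filterlim (Usp \<gamma> \<mu> K) at_top (at_left 0)"
    unfolding Usp_eq_the_inv_into by (rule Y.filterlim_the_inv_into_greaterThan_at_top)
  with Yfun_times_tendsto_at_top[of \<mu> \<gamma> K] params
  have "((\<lambda>y. Yfun \<gamma> \<mu> K (Usp \<gamma> \<mu> K y) * Usp \<gamma> \<mu> K y) \<longlongrightarrow> - K) (at_left 0)"
    by (auto intro: filterlim_compose)
  moreover have "\<forall>\<^sub>F y in at_left 0. y \<in> {y_D \<gamma> \<mu> K<..<0}"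
    using y_D_neg by (rule eventually_at_left_real)
  then have "\<forall>\<^sub>F y in at_left 0. Yfun \<gamma> \<mu> K (Usp \<gamma> \<mu> K y) * Usp \<gamma> \<mu> K y = y * Usp \<gamma> \<mu> K y"
    by eventually_elim (simp add: Yfun_Usp)
  ultimately show ?thesis
    by (rule Lim_transform_eventually)
qed

end

theorem lemma3p9:
  fixes \<gamma> \<mu> K :: real
  assumes "1 < \<gamma>" "\<gamma> < 3" "0 < \<mu>" "\<mu> < 1" "0 < K"
  shows "y_D \<gamma> \<mu> K < 0 \<and>
    (\<forall>y. y_D \<gamma> \<mu> K < y \<and> y < 0 \<longrightarrow> (\<exists>!U. U > U_D \<gamma> \<and> y = Yfun \<gamma> \<mu> K U))\<and>
    (\<forall>y. y_D \<gamma> \<mu> K < y \<and> y < 0 \<longrightarrow>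
           (\<exists>D. (Usp \<gamma> \<mu> K has_real_derivative D) (at y) \<and>
                y * D = - (((\<gamma> + 1) * Usp \<gamma> \<mu> K y - 2 * \<mu>) * Usp \<gamma> \<mu> K y)
                         / ((\<gamma> + 1) * Usp \<gamma> \<mu> K y - 2))) \<and>
    ((\<lambda>y. y * Usp \<gamma> \<mu> K y) \<longlongrightarrow> - K) (at_left 0) \<and>
    (\<forall>y. y_D \<gamma> \<mu> K < y \<and> y < 0 \<longrightarrow> U_D \<gamma> < Usp \<gamma> \<mu> K y)"
proof -
  have "\<exists>!U. U > U_D \<gamma> \<and> y = Yfun \<gamma> \<mu> K U" if "y_D \<gamma> \<mu> K < y" "y < 0" for y
  proof (rule ex1I[of _ "Usp \<gamma> \<mu> K y"])
    show "U_D \<gamma> < Usp \<gamma> \<mu> K y \<and> y = Yfun \<gamma> \<mu> K (Usp \<gamma> \<mu> K y)"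
      using U_D_less_Usp[OF assms that] Yfun_Usp[OF assms that] by simp
    show "U = Usp \<gamma> \<mu> K y" if "U_D \<gamma> < U \<and> y = Yfun \<gamma> \<mu> K U" for U
      using Usp_Yfun[OF assms] that by simp
  qed
  then show ?thesis
    using y_D_neg[OF assms] Usp_ode[OF assms] Usp_times_tendsto[OF assms] U_D_less_Usp[OF assms]
    by blast
qed

end
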